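(* Let $d=(d_1,\dots,d_n)$ be a weak composition, and let $\gamma=\gamma(d)$, $\mu=\mu(d)$. If $c_\beta\in\mathbb{Z}$ for the (finitely many) weak compositions $\beta$ with $x^\beta\prec x^\gamma$ appearing, then \[ m_\mu\cdot\Big(x^\gamma+\sum_{\beta\prec\gamma}c_\beta x^\beta\Big)=x^d+\sum_{x^e<_{ts}x^d}b_ex^e,\qquad b_e\in\mathbb{Z}. \]
   Context: For a weak composition $d$ of length $n$, $x^d=x_1^{d_1}\cdots x_n^{d_n}$ and $\lambda(d)$ is its weakly decreasing rearrangement. $x^\beta\prec x^e$ (also written $\beta\prec e$) means $\lambda(\beta)<_L\lambda(e)$ in lexicographic order; $x^d<_{ts}x^e$ means either $\lambda(d)<_L\lambda(e)$, or $\lambda(d)=\lambda(e)$ and $d<_Le$. The permutation $\sigma(d)$ labels the entries $d_1,\dots,d_n$ by $1,\dots,n$ from largest to smallest, ties broken left to right. The weak composition $\gamma(d)$: assign value $0$ to the position carrying label $n$; recursively, if the position carrying label $t$ has been assigned value $s$, assign to the position carrying label $t-1$ the value $s$ if that position is to the left of the position of $t$, and $s+1$ otherwise; $\gamma(d)_i$ is the value assigned to position $i$. Then $\mu(d)=d-\gamma(d)$ (componentwise). For example $d=(3,1,3,0,2,0)$ gives $\sigma(d)=(1,4,2,5,3,6)$, $\gamma(d)=(1,0,1,0,1,0)$, $\mu(d)=(2,1,2,0,1,0)$. $m_\mu$ is the sum of all distinct monomials in the $\mathfrak S_n$-orbit of $x^\mu$. *)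

theory Defs
  imports "HOL-Combinatorics.Permutations"
begin

text \<open>Weak compositions of length n are lists of naturals of length n (positions 0..n-1).
  Polynomials in x_1..x_n with integer coefficients are functions from exponent lists to int.\<close>

definition lam :: "nat list \<Rightarrow> nat list" where
  "lam d = rev (sort d)"

definition lex_less :: "nat list \<Rightarrow> nat list \<Rightarrow> bool" where
  "lex_less xs ys \<longleftrightarrow> (xs, ys) \<in> lexord {(a, b). a < b}"

definition prec :: "nat list \<Rightarrow> nat list \<Rightarrow> bool" where
  "prec b e \<longleftrightarrow> lex_less (lam b) (lam e)"

definition ts_less :: "nat list \<Rightarrow> nat list \<Rightarrow> bool" where
  "ts_less d e \<longleftrightarrow> lex_less (lam d) (lam e) \<or> (lam d = lam e \<and> lex_less d e)"

text \<open>sigma d i: label (1..n) of position i; largest entries first, ties left to right.\<close>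
definition sigma :: "nat list \<Rightarrow> nat \<Rightarrow> nat" where
  "sigma d i = 1 + card {j. j < length d \<and> d ! j > d ! i}
                 + card {j. j < i \<and> d ! j = d ! i}"

definition pos :: "nat list \<Rightarrow> nat \<Rightarrow> nat" where
  "pos d t = (THE i. i < length d \<and> sigma d i = t)"

text \<open>gval d k = value assigned to the position carrying label n - k.\<close>
fun gval :: "nat list \<Rightarrow> nat \<Rightarrow> nat" where
  "gval d 0 = 0"
| "gval d (Suc k) =
     (let t = length d - Suc k in
        if pos d t < pos d (t + 1) then gval d k else gval d k + 1)"

definition gamma :: "nat list \<Rightarrow> nat list" where
  "gamma d = map (\<lambda>i. gval d (length d - sigma d i)) [0..<length d]"

definition mu :: "nat list \<Rightarrow> nat list" where
  "mu d = map2 (-) d (gamma d)"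

definition mono :: "nat list \<Rightarrow> nat list \<Rightarrow> int" where
  "mono a e = (if e = a then 1 else 0)"

text \<open>Monomial symmetric function: sum of distinct monomials in the S_n-orbit of x^mu.\<close>
definition msym :: "nat list \<Rightarrow> nat list \<Rightarrow> int" where
  "msym m e = (if e \<in> {map (\<lambda>i. m ! p i) [0..<length m] | p. p permutes {..<length m}}
               then 1 else 0)"

definition pmult :: "(nat list \<Rightarrow> int) \<Rightarrow> (nat list \<Rightarrow> int) \<Rightarrow> nat list \<Rightarrow> int" where
  "pmult p q e = (\<Sum>(a, b) \<in> {(a, b). length a = length e \<and> length b = length e
                                 \<and> map2 (+) a b = e}. p a * q b)"

end

theory Submission
  imports Defs
begin

text \<open>Write \<open>d = \<mu> + \<gamma>\<close>. Along the labelling \<open>\<sigma>(d)\<close> both \<open>\<gamma>\<close> and \<open>\<mu>\<close> are weakly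
  decreasing (\<open>\<gamma>\<close> drops by one exactly where \<open>d\<close> drops and the next label lies to the
  left), so \<open>\<mu>\<close> and \<open>\<gamma>\<close> are similarly ordered and \<open>\<lambda>(d) = \<lambda>(\<mu>) + \<lambda>(\<gamma>)\<close>.
  For any \<open>a, b\<close> one has \<open>\<lambda>(a + b) \<le> \<lambda>(a) + \<lambda>(b)\<close> lexicographically, with equality iff
  \<open>a\<close> and \<open>b\<close> are similarly ordered. Hence a product \<open>x\<^sup>a x\<^sup>b\<close> with \<open>a\<close> a rearrangement
  of \<open>\<mu>\<close> and \<open>b \<prec> \<gamma>\<close> has \<open>\<lambda>(a + b) < \<lambda>(d)\<close>, and with \<open>b = \<gamma>\<close> it can only reach
  \<open>\<lambda>(d)\<close> when \<open>a\<close> is similarly ordered with \<open>\<gamma>\<close>; among those rearrangements \<open>a = \<mu>\<close> is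
  the unique one making \<open>a + \<gamma>\<close> lexicographically maximal, namely equal to \<open>d\<close>.\<close>

lemma lex_less_irrefl: "\<not> lex_less xs xs"
  unfolding lex_less_def by (rule lexord_irreflexive) simp

lemma lex_less_trans: "lex_less xs ys \<Longrightarrow> lex_less ys zs \<Longrightarrow> lex_less xs zs"
  unfolding lex_less_def by (erule lexord_trans) (auto simp: trans_def)

lemma lex_less_add_left:
  "length w = length xs \<Longrightarrow> length w = length ys \<Longrightarrow> lex_less xs ys
    \<Longrightarrow> lex_less (map2 (+) w xs) (map2 (+) w ys)"
proof (induction w arbitrary: xs ys)
  case Nil
  then show ?case by (simp add: lex_less_def)
next
  case (Cons a w)
  then obtain x xs' y ys' where "xs = x # xs'" "ys = y # ys'" by (metis length_Suc_conv)
  with Cons show ?case by (auto simp: lex_less_def)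
qed

definition lex_le :: "nat list \<Rightarrow> nat list \<Rightarrow> bool" where
  "lex_le xs ys \<longleftrightarrow> xs = ys \<or> lex_less xs ys"

lemma lex_le_Cons: "lex_le xs ys \<Longrightarrow> lex_le (x # xs) (x # ys)"
  by (auto simp: lex_le_def lex_less_def)

lemma lex_le_less_trans: "lex_le xs ys \<Longrightarrow> lex_less ys zs \<Longrightarrow> lex_less xs zs"
  unfolding lex_le_def using lex_less_trans by blast

lemma lam_eq_if_mset_eq: "mset xs = mset ys \<Longrightarrow> lam xs = lam ys"
  unfolding lam_def by (metis sorted_list_of_multiset_mset)

lemma length_lam [simp]: "length (lam xs) = length xs"
  by (simp add: lam_def)

lemma list_max_element:
  fixes g :: "'a \<Rightarrow> 'b::linorder"
  assumes "Z \<noteq> []"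
  obtains z where "z \<in> set Z" "\<forall>w\<in>set Z. g w \<le> g z"
proof -
  have "Max (g ` set Z) \<in> g ` set Z" using assms by (intro Max_in) auto
  then obtain z where "z \<in> set Z" "g z = Max (g ` set Z)" by auto
  then show ?thesis using that by simp
qed

lemma lam_map_remove1_max:
  fixes g :: "'a \<Rightarrow> nat"
  assumes "z \<in> set Z" "\<forall>w\<in>set Z. g w \<le> g z"
  shows "lam (map g Z) = g z # lam (map g (remove1 z Z))"
proof -
  have m: "mset (map g Z) = mset (map g (remove1 z Z) @ [g z])"
    using assms(1) by (simp add: image_mset_Diff)
  have s: "sorted (sort (map g (remove1 z Z)) @ [g z])"
    using assms by (auto simp: sorted_append dest: set_remove1_subset[THEN subsetD])
  have "sort (map g Z) = sort (map g (remove1 z Z)) @ [g z]"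
    by (rule properties_for_sort) (use m s in auto)
  then show ?thesis by (simp add: lam_def)
qed

definition similarly_ordered :: "(nat \<times> nat) list \<Rightarrow> bool" where
  "similarly_ordered Z \<longleftrightarrow> (\<forall>p\<in>set Z. \<forall>q\<in>set Z. fst q < fst p \<longrightarrow> snd q \<le> snd p)"

lemma similarly_ordered_sum_max:
  assumes "similarly_ordered Z" "z \<in> set Z" "\<forall>w\<in>set Z. fst w + snd w \<le> fst z + snd z"
    and "w \<in> set Z"
  shows "fst w \<le> fst z \<and> snd w \<le> snd z"
  using assms unfolding similarly_ordered_def by (metis add_less_le_mono add_le_less_mono not_le)

lemma similarly_ordered_remove1_iff:
  assumes "z \<in> set Z" "\<forall>w\<in>set Z. fst w \<le> fst z \<and> snd w \<le> snd z"
  shows "similarly_ordered (remove1 z Z) \<longleftrightarrow> similarly_ordered Z"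
proof
  assume s: "similarly_ordered (remove1 z Z)"
  show "similarly_ordered Z" unfolding similarly_ordered_def
  proof (intro ballI impI)
    fix p q assume "p \<in> set Z" "q \<in> set Z" "fst q < fst p"
    then show "snd q \<le> snd p"
      using s assms by (cases "p = z"; cases "q = z")
        (auto simp: similarly_ordered_def)
  qed
qed (auto simp: similarly_ordered_def dest: set_remove1_subset[THEN subsetD])

lemma lam_sum_pairs:
  "lex_le (lam (map (\<lambda>p. fst p + snd p) Z)) (map2 (+) (lam (map fst Z)) (lam (map snd Z)))
   \<and> (lam (map (\<lambda>p. fst p + snd p) Z) = map2 (+) (lam (map fst Z)) (lam (map snd Z))
      \<longleftrightarrow> similarly_ordered Z)"
proof (induction "length Z" arbitrary: Z rule: less_induct)
  txt \<open>Peel off a pair \<open>z\<close> of maximal sum: it heads \<open>\<lambda>\<close> of the sums, and the heads of the two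
    right-hand \<open>\<lambda>\<close>'s add up to \<open>f z\<close> only if \<open>z\<close> maximises both coordinates.\<close>
  case less
  define f where "f = (\<lambda>p::nat \<times> nat. fst p + snd p)"
  show ?case
  proof (cases "Z = []")
    case True
    then show ?thesis by (simp add: lex_le_def similarly_ordered_def lam_def)
  next
    case False
    obtain z where z: "z \<in> set Z" "\<forall>w\<in>set Z. f w \<le> f z"
      by (rule list_max_element[OF False, where g = f])
    obtain za where za: "za \<in> set Z" "\<forall>w\<in>set Z. fst w \<le> fst za"
      by (rule list_max_element[OF False, where g = fst])
    obtain zb where zb: "zb \<in> set Z" "\<forall>w\<in>set Z. snd w \<le> snd zb"
      by (rule list_max_element[OF False, where g = snd])
    have lam_f: "lam (map f Z) = f z # lam (map f (remove1 z Z))"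
      using z by (rule lam_map_remove1_max)
    have "fst z \<le> fst za" "snd z \<le> snd zb"
      using z(1) za zb by auto
    then consider "f z < fst za + snd zb" | "fst z = fst za" "snd z = snd zb"
      unfolding f_def by linarith
    then show ?thesis
    proof cases
      case 1
      have "lex_less (lam (map f Z)) (map2 (+) (lam (map fst Z)) (lam (map snd Z)))"
        using 1 by (simp add: lam_f lam_map_remove1_max[OF za] lam_map_remove1_max[OF zb] lex_less_def)
      moreover have "\<not> similarly_ordered Z"
      proof
        assume "similarly_ordered Z"
        with z za(1) zb(1) have "fst za \<le> fst z" "snd zb \<le> snd z"
          using similarly_ordered_sum_max unfolding f_def by blast+
        with 1 show False unfolding f_def by linarith
      qed
      ultimately show ?thesis unfolding lex_le_def f_def using lex_less_irrefl by metis
    next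
      case 2
      let ?Z' = "remove1 z Z"
      have z_max: "\<forall>w\<in>set Z. fst w \<le> fst z \<and> snd w \<le> snd z"
        using 2 za zb by simp
      have lam_fst_snd: "map2 (+) (lam (map fst Z)) (lam (map snd Z))
          = f z # map2 (+) (lam (map fst ?Z')) (lam (map snd ?Z'))"
        using z(1) z_max by (simp add: lam_map_remove1_max f_def split: prod.split)
      have "length ?Z' < length Z"
        using z(1) length_pos_if_in_set[OF z(1)] by (simp add: length_remove1)
      with less.hyps have IH:
        "lex_le (lam (map f ?Z')) (map2 (+) (lam (map fst ?Z')) (lam (map snd ?Z')))"
        "lam (map f ?Z') = map2 (+) (lam (map fst ?Z')) (lam (map snd ?Z'))
          \<longleftrightarrow> similarly_ordered ?Z'"
        unfolding f_def by blast+
      have "lex_le (lam (map f Z)) (map2 (+) (lam (map fst Z)) (lam (map snd Z)))"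
        unfolding lam_f lam_fst_snd by (rule lex_le_Cons[OF IH(1)])
      moreover have "lam (map f Z) = map2 (+) (lam (map fst Z)) (lam (map snd Z))
          \<longleftrightarrow> similarly_ordered Z"
        unfolding lam_f lam_fst_snd using IH(2) similarly_ordered_remove1_iff[OF z(1) z_max] by simp
      ultimately show ?thesis unfolding f_def by blast
    qed
  qed
qed

lemma lam_add:
  assumes "length a = length b"
  shows "lex_le (lam (map2 (+) a b)) (map2 (+) (lam a) (lam b))"
    and "lam (map2 (+) a b) = map2 (+) (lam a) (lam b)
      \<longleftrightarrow> (\<forall>i<length a. \<forall>j<length a. a ! j < a ! i \<longrightarrow> b ! j \<le> b ! i)"
proof -
  have map_zip: "map (\<lambda>p. fst p + snd p) (zip a b) = map2 (+) a b"
    by (simp add: case_prod_beta)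
  have "similarly_ordered (zip a b) \<longleftrightarrow> (\<forall>i<length a. \<forall>j<length a. a ! j < a ! i \<longrightarrow> b ! j \<le> b ! i)"
    unfolding similarly_ordered_def using assms by (auto simp: set_zip) blast
  then show "lex_le (lam (map2 (+) a b)) (map2 (+) (lam a) (lam b))"
    "lam (map2 (+) a b) = map2 (+) (lam a) (lam b)
      \<longleftrightarrow> (\<forall>i<length a. \<forall>j<length a. a ! j < a ! i \<longrightarrow> b ! j \<le> b ! i)"
    using lam_sum_pairs[of "zip a b"] assms unfolding map_zip by simp_all
qed

text \<open>\<open>ranked_before d j i\<close>: position \<open>j\<close> receives a smaller label than position \<open>i\<close>.\<close>

definition ranked_before :: "nat list \<Rightarrow> nat \<Rightarrow> nat \<Rightarrow> bool" where
  "ranked_before d j i \<longleftrightarrow> d ! i < d ! j \<or> (d ! j = d ! i \<and> j < i)"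

lemma ranked_before_trans: "ranked_before d j i \<Longrightarrow> ranked_before d i k \<Longrightarrow> ranked_before d j k"
  unfolding ranked_before_def by auto

lemma sigma_eq_card_ranked_before:
  assumes "i < length d"
  shows "sigma d i = 1 + card {j. j < length d \<and> ranked_before d j i}"
proof -
  have "{j. j < length d \<and> ranked_before d j i}
      = {j. j < length d \<and> d ! j > d ! i} \<union> {j. j < i \<and> d ! j = d ! i}"
    using assms unfolding ranked_before_def by auto
  moreover have "card ({j. j < length d \<and> d ! j > d ! i} \<union> {j. j < i \<and> d ! j = d ! i})
     = card {j. j < length d \<and> d ! j > d ! i} + card {j. j < i \<and> d ! j = d ! i}"
    by (rule card_Un_disjoint) auto
  ultimately show ?thesis unfolding sigma_def by simp
qed

lemma sigma_less_if_ranked_before: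
  assumes i: "i < length d" and k: "k < length d" and r: "ranked_before d i k"
  shows "sigma d i < sigma d k"
proof -
  have "{j. j < length d \<and> ranked_before d j i} \<subset> {j. j < length d \<and> ranked_before d j k}"
  proof
    show "{j. j < length d \<and> ranked_before d j i} \<subseteq> {j. j < length d \<and> ranked_before d j k}"
      using r ranked_before_trans by blast
    have "i \<notin> {j. j < length d \<and> ranked_before d j i}" by (simp add: ranked_before_def)
    moreover have "i \<in> {j. j < length d \<and> ranked_before d j k}" using i r by simp
    ultimately show "{j. j < length d \<and> ranked_before d j i} \<noteq> {j. j < length d \<and> ranked_before d j k}"
      by blast
  qed
  then have "card {j. j < length d \<and> ranked_before d j i} < card {j. j < length d \<and> ranked_before d j k}"
    by (rule psubset_card_mono[rotated]) simp
  then show ?thesis using sigma_eq_card_ranked_before[OF i] sigma_eq_card_ranked_before[OF k] by simp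
qed

lemma ranked_before_total: "i \<noteq> k \<Longrightarrow> ranked_before d i k \<or> ranked_before d k i"
  unfolding ranked_before_def by auto

lemma sigma_less_iff:
  "i < length d \<Longrightarrow> k < length d \<Longrightarrow> sigma d i < sigma d k \<longleftrightarrow> ranked_before d i k"
  by (metis ranked_before_total sigma_less_if_ranked_before less_asym less_irrefl)

lemma sigma_inj: "i < length d \<Longrightarrow> k < length d \<Longrightarrow> sigma d i = sigma d k \<Longrightarrow> i = k"
  by (metis ranked_before_total sigma_less_if_ranked_before less_irrefl)

lemma sigma_bounds:
  assumes "i < length d"
  shows "1 \<le> sigma d i \<and> sigma d i \<le> length d"
proof -
  have "{j. j < length d \<and> ranked_before d j i} \<subseteq> {..<length d} - {i}"
    by (auto simp: ranked_before_def)
  then have "card {j. j < length d \<and> ranked_before d j i} \<le> card ({..<length d} - {i})"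
    by (intro card_mono) auto
  also have "\<dots> = length d - 1" using assms by simp
  finally show ?thesis using sigma_eq_card_ranked_before[OF assms] assms by simp
qed

lemma sigma_image: "sigma d ` {..<length d} = {1..length d}"
proof -
  have inj: "inj_on (sigma d) {..<length d}" by (auto intro: inj_onI sigma_inj)
  have sub: "sigma d ` {..<length d} \<subseteq> {1..length d}" using sigma_bounds by auto
  have "card (sigma d ` {..<length d}) = card {1..length d}" using card_image[OF inj] by simp
  then show ?thesis using sub by (intro card_subset_eq) auto
qed

lemma pos_sigma: "i < length d \<Longrightarrow> pos d (sigma d i) = i"
  unfolding pos_def by (rule the_equality) (auto intro: sigma_inj)

lemma sigma_pos:
  assumes "1 \<le> t" "t \<le> length d"
  shows "pos d t < length d \<and> sigma d (pos d t) = t"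
proof -
  from assms obtain i where "i < length d" "t = sigma d i"
    using sigma_image[of d] by (metis atLeastAtMost_iff imageE lessThan_iff)
  then show ?thesis using pos_sigma by simp
qed

text \<open>Since \<open>gval d k\<close> is the value at label \<open>n - k\<close>, \<open>gamma_at d t\<close> is the value of \<open>\<gamma>(d)\<close> at the
  position carrying label \<open>t\<close>.\<close>

definition gamma_at :: "nat list \<Rightarrow> nat \<Rightarrow> nat" where
  "gamma_at d t = gval d (length d - t)"

lemma gamma_at_length [simp]: "gamma_at d (length d) = 0"
  by (simp add: gamma_at_def)

lemma gamma_at_step:
  assumes "1 \<le> t" "t < length d"
  shows "gamma_at d t
    = (if pos d t < pos d (t + 1) then gamma_at d (t + 1) else Suc (gamma_at d (t + 1)))"
proof -
  from assms have "length d - t = Suc (length d - (t + 1))" "length d - Suc (length d - (t + 1)) = t"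
    by auto
  then show ?thesis unfolding gamma_at_def by (simp add: Let_def)
qed

lemma gamma_at_step_bounds:
  assumes "1 \<le> t" "t < length d"
  shows "gamma_at d (t + 1) \<le> gamma_at d t"
    and "gamma_at d t + d ! pos d (t + 1) \<le> gamma_at d (t + 1) + d ! pos d t"
    and "gamma_at d t = gamma_at d (t + 1) \<Longrightarrow> pos d t < pos d (t + 1)"
proof -
  have p: "pos d t < length d" "sigma d (pos d t) = t"
    and p': "pos d (t + 1) < length d" "sigma d (pos d (t + 1)) = t + 1"
    using sigma_pos[of t d] sigma_pos[of "t + 1" d] assms by auto
  then have r: "ranked_before d (pos d t) (pos d (t + 1))"
    using sigma_less_iff[OF p(1) p'(1)] by simp
  have "pos d t \<noteq> pos d (t + 1)" using p p' by auto
  then have "\<not> pos d t < pos d (t + 1) \<Longrightarrow> d ! pos d (t + 1) < d ! pos d t"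
    using r unfolding ranked_before_def by auto
  moreover have "d ! pos d (t + 1) \<le> d ! pos d t"
    using r unfolding ranked_before_def by auto
  ultimately show "gamma_at d (t + 1) \<le> gamma_at d t"
    and "gamma_at d t + d ! pos d (t + 1) \<le> gamma_at d (t + 1) + d ! pos d t"
    and "gamma_at d t = gamma_at d (t + 1) \<Longrightarrow> pos d t < pos d (t + 1)"
    using gamma_at_step[OF assms] by (auto split: if_splits)
qed

lemma gamma_at_le: "1 \<le> t \<Longrightarrow> t \<le> length d \<Longrightarrow> gamma_at d t \<le> d ! pos d t"
proof (induction "length d - t" arbitrary: t)
  case 0
  then have "t = length d" by simp
  then show ?case by simp
next
  case (Suc k)
  then have "gamma_at d (t + 1) \<le> d ! pos d (t + 1)" by auto
  moreover have "gamma_at d t + d ! pos d (t + 1) \<le> gamma_at d (t + 1) + d ! pos d t"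
    using gamma_at_step_bounds(2)[of t d] Suc by simp
  ultimately show ?case by linarith
qed

lemma gamma_at_antimono:
  assumes "1 \<le> s" "s \<le> t" "t \<le> length d"
  shows "gamma_at d t \<le> gamma_at d s"
    and "d ! pos d t - gamma_at d t \<le> d ! pos d s - gamma_at d s"
    and "gamma_at d s = gamma_at d t \<Longrightarrow> pos d s \<le> pos d t"
proof -
  have "gamma_at d t \<le> gamma_at d s \<and> d ! pos d t - gamma_at d t \<le> d ! pos d s - gamma_at d s
      \<and> (gamma_at d s = gamma_at d t \<longrightarrow> pos d s \<le> pos d t)"
    using assms(2,3)
  proof (induction t rule: dec_induct)
    case (step t)
    then have t: "1 \<le> t" "t < length d" using assms(1) by simp_all
    note bounds = gamma_at_step_bounds[OF t]
    from step.IH t(2) have IH: "gamma_at d t \<le> gamma_at d s"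
      "d ! pos d t - gamma_at d t \<le> d ! pos d s - gamma_at d s"
      "gamma_at d s = gamma_at d t \<Longrightarrow> pos d s \<le> pos d t"
      by simp_all
    have "gamma_at d t \<le> d ! pos d t" "gamma_at d (t + 1) \<le> d ! pos d (t + 1)"
      using gamma_at_le t by simp_all
    with bounds(1,2) IH(1,2)
    have "gamma_at d (t + 1) \<le> gamma_at d s"
      "d ! pos d (t + 1) - gamma_at d (t + 1) \<le> d ! pos d s - gamma_at d s"
      by linarith+
    moreover have "pos d s \<le> pos d (t + 1)" if "gamma_at d s = gamma_at d (t + 1)"
      using that bounds(1,3) IH(1,3) by fastforce
    ultimately show ?case by simp
  qed simp
  then show "gamma_at d t \<le> gamma_at d s"
    and "d ! pos d t - gamma_at d t \<le> d ! pos d s - gamma_at d s"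
    and "gamma_at d s = gamma_at d t \<Longrightarrow> pos d s \<le> pos d t"
    by auto
qed

lemma length_gamma [simp]: "length (gamma d) = length d"
  by (simp add: gamma_def)

lemma length_mu [simp]: "length (mu d) = length d"
  by (simp add: mu_def)

lemma gamma_nth: "i < length d \<Longrightarrow> gamma d ! i = gamma_at d (sigma d i)"
  by (simp add: gamma_def gamma_at_def)

lemma mu_nth: "i < length d \<Longrightarrow> mu d ! i = d ! i - gamma d ! i"
  by (simp add: mu_def)

lemma gamma_nth_le: "i < length d \<Longrightarrow> gamma d ! i \<le> d ! i"
  using gamma_at_le[of "sigma d i" d] sigma_bounds[of i d] pos_sigma[of i d]
  by (simp add: gamma_nth)

lemma mu_plus_gamma: "map2 (+) (mu d) (gamma d) = d"
  by (rule nth_equalityI) (auto simp: mu_nth gamma_nth_le)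

lemma gamma_mu_antimono:
  assumes "i < length d" "k < length d" "sigma d i \<le> sigma d k"
  shows "gamma d ! k \<le> gamma d ! i" and "mu d ! k \<le> mu d ! i"
    and "gamma d ! i = gamma d ! k \<Longrightarrow> i \<le> k"
proof -
  have "1 \<le> sigma d i" "sigma d k \<le> length d"
    using sigma_bounds assms(1,2) by blast+
  note antimono = gamma_at_antimono[OF this(1) assms(3) this(2)]
  show "gamma d ! k \<le> gamma d ! i" and "mu d ! k \<le> mu d ! i"
    and "gamma d ! i = gamma d ! k \<Longrightarrow> i \<le> k"
    using antimono unfolding gamma_nth[OF assms(1)] gamma_nth[OF assms(2)]
      mu_nth[OF assms(1)] mu_nth[OF assms(2)] pos_sigma[OF assms(1)] pos_sigma[OF assms(2)]
    by simp_all
qed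

lemma sigma_less_if_mu_less:
  assumes "i < length d" "j < length d" "mu d ! j < mu d ! i"
  shows "sigma d i < sigma d j"
proof (rule ccontr)
  assume "\<not> sigma d i < sigma d j"
  then have "mu d ! i \<le> mu d ! j" using gamma_mu_antimono(2)[of j d i] assms(1,2) by simp
  with assms(3) show False by simp
qed

lemma lam_mu_plus_lam_gamma: "lam d = map2 (+) (lam (mu d)) (lam (gamma d))"
proof -
  have "gamma d ! j \<le> gamma d ! i"
    if "i < length d" "j < length d" "mu d ! j < mu d ! i" for i j
    using gamma_mu_antimono(1) sigma_less_if_mu_less[OF that] that(1,2) by simp
  then show ?thesis using lam_add(2)[of "mu d" "gamma d"] by (simp add: mu_plus_gamma)
qed

lemma card_nth_filter_eq_if_mset_eq:
  assumes "mset a = mset b"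
  shows "card {j. j < length a \<and> P (a ! j)} = card {j. j < length b \<and> P (b ! j)}"
proof -
  have "length (filter P a) = length (filter P b)"
    by (metis assms mset_filter size_mset)
  then show ?thesis by (simp add: length_filter_conv_card)
qed

lemma rearrangement_of_mu_first_difference_le:
  assumes len: "length a = length d" and ms: "mset a = mset (mu d)"
    and sim: "\<forall>i<length d. \<forall>j<length d. a ! j < a ! i \<longrightarrow> gamma d ! j \<le> gamma d ! i"
    and i: "i < length d" and before: "\<forall>j<i. a ! j = mu d ! j"
  shows "a ! i \<le> mu d ! i"
proof (rule ccontr)
  txt \<open>Every position where \<open>\<mu>\<close> is at least \<open>a ! i\<close> has a smaller label than \<open>i\<close>, hence
    lies before \<open>i\<close> or carries a larger \<open>\<gamma>\<close>-value; either way \<open>a\<close> is at least \<open>a ! i\<close> there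
    too. Together with position \<open>i\<close> itself, \<open>a\<close> would have more entries \<open>\<ge> a ! i\<close> than \<open>\<mu>\<close>.\<close>
  assume "\<not> a ! i \<le> mu d ! i"
  then have gt: "mu d ! i < a ! i" by simp
  define W where "W = {j. j < length d \<and> a ! i \<le> mu d ! j}"
  define U where "U = {j. j < length d \<and> a ! i \<le> a ! j}"
  have card_eq: "card U = card W"
    unfolding U_def W_def using card_nth_filter_eq_if_mset_eq[OF ms] len by simp
  have "W \<subseteq> U"
  proof
    fix j assume "j \<in> W"
    then have j: "j < length d" "a ! i \<le> mu d ! j" unfolding W_def by auto
    then have "sigma d j < sigma d i"
      using sigma_less_if_mu_less[OF j(1) i] gt by simp
    then have "gamma d ! i \<le> gamma d ! j" "gamma d ! j = gamma d ! i \<Longrightarrow> j \<le> i" "j \<noteq> i"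
      using gamma_mu_antimono[of j d i] i j(1) by auto
    then consider "j < i" | "gamma d ! i < gamma d ! j"
      by force
    then show "j \<in> U"
    proof cases
      case 1
      then show ?thesis using before j unfolding U_def by simp
    next
      case 2
      then have "a ! i \<le> a ! j" using sim i j(1) by (meson not_le)
      then show ?thesis using j unfolding U_def by simp
    qed
  qed
  moreover have "i \<in> U" "i \<notin> W" using i gt unfolding U_def W_def by auto
  ultimately have "W \<subset> U" by blast
  then have "card W < card U" by (rule psubset_card_mono[rotated]) (simp add: U_def)
  with card_eq show False by simp
qed

lemma rearrangement_of_mu_plus_gamma_lex_less:
  assumes len: "length a = length d" and ms: "mset a = mset (mu d)"
    and sim: "\<forall>i<length d. \<forall>j<length d. a ! j < a ! i \<longrightarrow> gamma d ! j \<le> gamma d ! i"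
    and ne: "a \<noteq> mu d"
  shows "lex_less (map2 (+) a (gamma d)) d"
proof -
  have "\<exists>i. i < length d \<and> a ! i \<noteq> mu d ! i"
    using ne nth_equalityI[of a "mu d"] len by auto
  from exists_least_iff[THEN iffD1, OF this]
  obtain i where i: "i < length d" "a ! i \<noteq> mu d ! i"
    and before: "\<forall>j<i. a ! j = mu d ! j"
    by auto
  have "a ! i < mu d ! i"
    using rearrangement_of_mu_first_difference_le[OF len ms sim i(1) before] i(2) by simp
  moreover have "take i (map2 (+) a (gamma d)) = take i (map2 (+) (mu d) (gamma d))"
    by (rule nth_equalityI) (use i len before in auto)
  ultimately show ?thesis
    unfolding lex_less_def lexord_take_index_conv
    using i len mu_plus_gamma[of d] by (intro disjI2 exI[of _ i]) (auto simp: mu_nth)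
qed

lemma set_le_sum_list_map2_add:
  fixes a b :: "nat list"
  assumes "length a = length b"
  shows "set a \<subseteq> {..sum_list (map2 (+) a b)}" and "set b \<subseteq> {..sum_list (map2 (+) a b)}"
proof -
  have "a ! i + b ! i \<le> sum_list (map2 (+) a b)" if "i < length a" for i
    using elem_le_sum_list[of i "map2 (+) a b"] that assms by simp
  then show "set a \<subseteq> {..sum_list (map2 (+) a b)}" "set b \<subseteq> {..sum_list (map2 (+) a b)}"
    using assms by (fastforce simp: in_set_conv_nth)+
qed

lemma finite_splittings:
  fixes e :: "nat list"
  shows "finite {(a, b). length a = length e \<and> length b = length e \<and> map2 (+) a b = e}"
proof (rule finite_subset)
  let ?S = "{xs. set xs \<subseteq> {..sum_list e} \<and> length xs = length e}"
  show "finite (?S \<times> ?S)"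
    by (simp add: finite_lists_length_eq)
  show "{(a, b). length a = length e \<and> length b = length e \<and> map2 (+) a b = e} \<subseteq> ?S \<times> ?S"
  proof
    fix x assume "x \<in> {(a, b). length a = length e \<and> length b = length e \<and> map2 (+) a b = e}"
    then obtain a b where x: "x = (a, b)"
      and ab: "length a = length e" "length b = length e" "map2 (+) a b = e"
      by blast
    from ab(1,2) have "length a = length b" by simp
    from set_le_sum_list_map2_add[OF this]
    have "set a \<subseteq> {..sum_list e}" "set b \<subseteq> {..sum_list e}" unfolding ab(3) .
    with ab(1,2) show "x \<in> ?S \<times> ?S" unfolding x by simp
  qed
qed

lemma pmult_eq_single_term:
  assumes single: "\<And>a b. length a = length e \<Longrightarrow> length b = length e \<Longrightarrow> map2 (+) a b = e
      \<Longrightarrow> p a * q b \<noteq> 0 \<Longrightarrow> a = u \<and> b = v"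
  shows "pmult p q e = (if length u = length e \<and> length v = length e \<and> map2 (+) u v = e
      then p u * q v else 0)"
proof -
  let ?P = "{(a, b). length a = length e \<and> length b = length e \<and> map2 (+) a b = e}"
  have "pmult p q e = (\<Sum>(a, b)\<in>?P. p a * q b)"
    unfolding pmult_def ..
  also have "\<dots> = (\<Sum>(a, b)\<in>?P \<inter> {(u, v)}. p a * q b)"
  proof (rule sum.mono_neutral_right)
    show "finite ?P" by (rule finite_splittings)
    show "\<forall>x\<in>?P - ?P \<inter> {(u, v)}. (case x of (a, b) \<Rightarrow> p a * q b) = 0"
      using single by fast
  qed auto
  finally show ?thesis by (auto split: if_splits)
qed

lemma mset_eq_if_msym_nonzero:
  assumes "msym m a \<noteq> 0"
  shows "mset a = mset m"
proof -
  from assms obtain p where p: "p permutes {..<length m}"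
    and a: "a = map (\<lambda>i. m ! p i) [0..<length m]"
    unfolding msym_def by (auto split: if_splits)
  have "mset a = image_mset (nth m) (image_mset p (mset_set {..<length m}))"
    unfolding a by (simp add: mset_map atLeast0LessThan image_mset.compositionality comp_def)
  also have "\<dots> = image_mset (nth m) (mset_set {..<length m})"
    using permutes_image_mset[OF p] by simp
  also have "\<dots> = mset m"
    by (metis atLeast0LessThan map_nth mset_map mset_upt)
  finally show ?thesis .
qed

lemma msym_self: "msym m m = 1"
proof -
  have "\<exists>p. m = map (\<lambda>i. m ! p i) [0..<length m] \<and> p permutes {..<length m}"
    by (rule exI[of _ id]) (simp add: map_nth)
  then show ?thesis unfolding msym_def by auto
qed

lemma product_term_not_ts_less_imp_leading:
  assumes a: "msym (mu d) a \<noteq> 0" and b: "b = gamma d \<or> prec b (gamma d)"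
    and len: "length a = length d" "length b = length d"
    and not_less: "\<not> ts_less (map2 (+) a b) d"
  shows "a = mu d \<and> b = gamma d"
proof -
  let ?e = "map2 (+) a b"
  have ms: "mset a = mset (mu d)" using mset_eq_if_msym_nonzero[OF a] .
  have le: "lex_le (lam ?e) (map2 (+) (lam (mu d)) (lam b))"
    using lam_add(1)[of a b] len lam_eq_if_mset_eq[OF ms] by simp
  have not_lam_less: "\<not> lex_less (lam ?e) (lam d)"
    using not_less unfolding ts_less_def by simp
  from b show ?thesis
  proof
    assume "prec b (gamma d)"
    then have "lex_less (map2 (+) (lam (mu d)) (lam b)) (lam d)"
      unfolding prec_def lam_mu_plus_lam_gamma[of d] using len(2)
      by (intro lex_less_add_left) simp_all
    with le not_lam_less show ?thesis using lex_le_less_trans by blast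
  next
    assume b_gamma: "b = gamma d"
    with le not_lam_less have lam_e: "lam ?e = lam d"
      unfolding lex_le_def lam_mu_plus_lam_gamma[of d] by blast
    then have "\<forall>i<length d. \<forall>j<length d. a ! j < a ! i \<longrightarrow> gamma d ! j \<le> gamma d ! i"
      using lam_add(2)[of a b] len b_gamma lam_eq_if_mset_eq[OF ms]
      unfolding lam_mu_plus_lam_gamma[of d] by simp
    with len ms have "a \<noteq> mu d \<Longrightarrow> lex_less ?e d"
      unfolding b_gamma by (intro rearrangement_of_mu_plus_gamma_lex_less) simp_all
    with lam_e not_less b_gamma show ?thesis unfolding ts_less_def by blast
  qed
qed

theorem lemma4p3:
  fixes d :: "nat list" and c :: "nat list \<Rightarrow> int"
  defines "n \<equiv> length d"
  shows "\<exists>b :: nat list \<Rightarrow> int. \<forall>e. length e = n \<longrightarrow>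
           pmult (msym (mu d))
                 (\<lambda>e. mono (gamma d) e
                      + (\<Sum>\<beta>\<in>{\<beta>. length \<beta> = n \<and> prec \<beta> (gamma d)}. c \<beta> * mono \<beta> e)) e
           = mono d e + (if ts_less e d then b e else 0)"
proof -
  define B where "B = {\<beta>. length \<beta> = n \<and> prec \<beta> (gamma d)}"
  define q where "q = (\<lambda>e. mono (gamma d) e + (\<Sum>\<beta>\<in>B. c \<beta> * mono \<beta> e))"
  have sum_B: "(\<Sum>\<beta>\<in>B. c \<beta> * mono \<beta> x) = 0" if "x \<notin> B" for x
    using that by (intro sum.neutral) (auto simp: mono_def)
  have "gamma d \<notin> B" unfolding B_def prec_def using lex_less_irrefl by simp
  then have q_gamma: "q (gamma d) = 1"
    unfolding q_def sum_B[OF \<open>gamma d \<notin> B\<close>] by (simp add: mono_def)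
  have q_support: "b = gamma d \<or> prec b (gamma d)" if "q b \<noteq> 0" for b
    using that sum_B[of b] unfolding q_def B_def mono_def by (auto split: if_splits)
  have "pmult (msym (mu d)) q e = mono d e" if e: "length e = n" "\<not> ts_less e d" for e
  proof -
    have "pmult (msym (mu d)) q e = (if map2 (+) (mu d) (gamma d) = e then 1 else 0)"
      using e q_support product_term_not_ts_less_imp_leading[of d] msym_self q_gamma
      by (subst pmult_eq_single_term[where u = "mu d" and v = "gamma d"])
        (auto simp: n_def)
    then show ?thesis by (auto simp: mu_plus_gamma mono_def)
  qed
  then show ?thesis
    by (intro exI[of _ "\<lambda>e. pmult (msym (mu d)) q e - mono d e"]) (auto simp: q_def B_def)
qed

end
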